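(* Let $(M,T)$ be an object of $\mathbb T({}_H\mathcal M)$. Then $(M,T)\cong(H\triangleright T(M),T)$ in $\mathbb T({}_H\mathcal M)$, where $H\triangleright T(M)$ is the $H$-submodule of $M$ generated by $T(M)$, equipped with the restriction of $T$. Consequently, if $M'\subseteq M$ is an $H$-submodule with $T(M')=0$, then $(M,T)\cong(M/M',T)$, where $T$ also denotes the projection induced on $M/M'$.
   Context: Throughout, $k$ is a field and $H$ is a Hopf algebra over $k$ with bijective antipode $S$ and Sweedler notation $\Delta(h)=h_{(1)}\otimes h_{(2)}$. For a left $H$-module $M$ (action $\triangleright$) and linear $T:M\to M$, put $T_h(m)=h_{(1)}\triangleright T(S(h_{(2)})\triangleright m)$. A projection $T$ ($T^2=T$) satisfies the c-condition if $T_h\circ T=T\circ T_h$ for all $h$. The category $\mathbb T({}_H\mathcal M)$ is defined as follows: - objects are pairs $(M,T)$ with $M$ a left $H$-module and $T$ a linear projection on $M$ satisfying the c-condition; - morphisms $f:(M,T)\to(N,S)$ are linear maps $f:T(M)\to S(N)$ with $f(T(h\triangleright m))=S(h\triangleright f(m))$ for all $h\in H$, $m\in T(M)$. *)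

theory Defs
  imports Main
begin

text \<open>Elements of H (x) H are represented by finite lists of pairs (Sweedler sums); equality in
 H (x) H (resp. H (x) H (x) H) is tested against all k-bilinear (resp. trilinear) forms, which
 characterises equality of tensors for vector spaces over a field.\<close>

definition linH :: "('k::field \<Rightarrow> 'h::ring_1 \<Rightarrow> 'h) \<Rightarrow> ('h \<Rightarrow> 'k) \<Rightarrow> bool" where
  "linH sH f \<longleftrightarrow> (\<forall>a b. f (a + b) = f a + f b) \<and> (\<forall>c a. f (sH c a) = c * f a)"

definition bilinH :: "('k::field \<Rightarrow> 'h::ring_1 \<Rightarrow> 'h) \<Rightarrow> ('h \<Rightarrow> 'h \<Rightarrow> 'k) \<Rightarrow> bool" where
  "bilinH sH \<phi> \<longleftrightarrow> (\<forall>b. linH sH (\<lambda>a. \<phi> a b)) \<and> (\<forall>a. linH sH (\<phi> a))"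

definition trilinH :: "('k::field \<Rightarrow> 'h::ring_1 \<Rightarrow> 'h) \<Rightarrow> ('h \<Rightarrow> 'h \<Rightarrow> 'h \<Rightarrow> 'k) \<Rightarrow> bool" where
  "trilinH sH \<psi> \<longleftrightarrow> (\<forall>b c. linH sH (\<lambda>a. \<psi> a b c)) \<and> (\<forall>a c. linH sH (\<lambda>b. \<psi> a b c))
      \<and> (\<forall>a b. linH sH (\<psi> a b))"

definition teq2 :: "('k::field \<Rightarrow> 'h::ring_1 \<Rightarrow> 'h) \<Rightarrow> ('h \<times> 'h) list \<Rightarrow> ('h \<times> 'h) list \<Rightarrow> bool" where
  "teq2 sH xs ys \<longleftrightarrow> (\<forall>\<phi>. bilinH sH \<phi> \<longrightarrow>
      sum_list (map (\<lambda>(a, b). \<phi> a b) xs) = sum_list (map (\<lambda>(a, b). \<phi> a b) ys))"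

definition hopf_algebra ::
  "('k::field \<Rightarrow> 'h::ring_1 \<Rightarrow> 'h) \<Rightarrow> ('h \<Rightarrow> ('h \<times> 'h) list) \<Rightarrow> ('h \<Rightarrow> 'k) \<Rightarrow> ('h \<Rightarrow> 'h) \<Rightarrow> bool" where
  "hopf_algebra sH Delta eps S \<longleftrightarrow>
     \<comment> \<open>k-algebra\<close>
     (\<forall>c a b. sH c (a + b) = sH c a + sH c b) \<and>
     (\<forall>c d a. sH (c + d) a = sH c a + sH d a) \<and>
     (\<forall>c d a. sH (c * d) a = sH c (sH d a)) \<and>
     (\<forall>a. sH 1 a = a) \<and>
     (\<forall>c a b. sH c (a * b) = sH c a * b \<and> sH c (a * b) = a * sH c b) \<and>
     \<comment> \<open>comultiplication: linear, coassociative, algebra map\<close>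
     (\<forall>a b. teq2 sH (Delta (a + b)) (Delta a @ Delta b)) \<and>
     (\<forall>c a. teq2 sH (Delta (sH c a)) (map (\<lambda>(x, y). (sH c x, y)) (Delta a))) \<and>
     (\<forall>a \<psi>. trilinH sH \<psi> \<longrightarrow>
        sum_list (map (\<lambda>(x, y). sum_list (map (\<lambda>(u, v). \<psi> u v y) (Delta x))) (Delta a)) =
        sum_list (map (\<lambda>(x, y). sum_list (map (\<lambda>(u, v). \<psi> x u v) (Delta y))) (Delta a))) \<and>
     (\<forall>a b. teq2 sH (Delta (a * b))
        (concat (map (\<lambda>(x, y). map (\<lambda>(u, v). (x * u, y * v)) (Delta b)) (Delta a)))) \<and>
     teq2 sH (Delta 1) [(1, 1)] \<and>
     \<comment> \<open>counit: linear, algebra map, counit laws\<close>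
     linH sH eps \<and>
     (\<forall>a b. eps (a * b) = eps a * eps b) \<and> eps 1 = 1 \<and>
     (\<forall>a. sum_list (map (\<lambda>(x, y). sH (eps x) y) (Delta a)) = a) \<and>
     (\<forall>a. sum_list (map (\<lambda>(x, y). sH (eps y) x) (Delta a)) = a) \<and>
     \<comment> \<open>antipode: linear, antipode laws, bijective\<close>
     (\<forall>a b. S (a + b) = S a + S b) \<and> (\<forall>c a. S (sH c a) = sH c (S a)) \<and>
     (\<forall>a. sum_list (map (\<lambda>(x, y). S x * y) (Delta a)) = sH (eps a) 1) \<and>
     (\<forall>a. sum_list (map (\<lambda>(x, y). x * S y) (Delta a)) = sH (eps a) 1) \<and>
     bij S"

record ('k, 'h, 'm) hmod =
  mcarr :: "'m set"
  mzero :: 'm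
  mplus :: "'m \<Rightarrow> 'm \<Rightarrow> 'm"
  msmult :: "'k \<Rightarrow> 'm \<Rightarrow> 'm"
  mact :: "'h \<Rightarrow> 'm \<Rightarrow> 'm"

definition hmodule :: "('k::field \<Rightarrow> 'h::ring_1 \<Rightarrow> 'h) \<Rightarrow> ('k, 'h, 'm) hmod \<Rightarrow> bool" where
  "hmodule sH M \<longleftrightarrow>
     mzero M \<in> mcarr M \<and>
     (\<forall>x\<in>mcarr M. \<forall>y\<in>mcarr M. mplus M x y \<in> mcarr M) \<and>
     (\<forall>c. \<forall>x\<in>mcarr M. msmult M c x \<in> mcarr M) \<and>
     (\<forall>h. \<forall>x\<in>mcarr M. mact M h x \<in> mcarr M) \<and>
     (\<forall>x\<in>mcarr M. \<forall>y\<in>mcarr M. \<forall>z\<in>mcarr M. mplus M (mplus M x y) z = mplus M x (mplus M y z)) \<and>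
     (\<forall>x\<in>mcarr M. \<forall>y\<in>mcarr M. mplus M x y = mplus M y x) \<and>
     (\<forall>x\<in>mcarr M. mplus M (mzero M) x = x) \<and>
     (\<forall>x\<in>mcarr M. \<exists>y\<in>mcarr M. mplus M x y = mzero M) \<and>
     (\<forall>c. \<forall>x\<in>mcarr M. \<forall>y\<in>mcarr M. msmult M c (mplus M x y) = mplus M (msmult M c x) (msmult M c y)) \<and>
     (\<forall>c d. \<forall>x\<in>mcarr M. msmult M (c + d) x = mplus M (msmult M c x) (msmult M d x)) \<and>
     (\<forall>c d. \<forall>x\<in>mcarr M. msmult M (c * d) x = msmult M c (msmult M d x)) \<and>
     (\<forall>x\<in>mcarr M. msmult M 1 x = x) \<and>
     (\<forall>h. \<forall>x\<in>mcarr M. \<forall>y\<in>mcarr M. mact M h (mplus M x y) = mplus M (mact M h x) (mact M h y)) \<and>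
     (\<forall>h c. \<forall>x\<in>mcarr M. mact M h (msmult M c x) = msmult M c (mact M h x)) \<and>
     (\<forall>a b. \<forall>x\<in>mcarr M. mact M (a + b) x = mplus M (mact M a x) (mact M b x)) \<and>
     (\<forall>c a. \<forall>x\<in>mcarr M. mact M (sH c a) x = msmult M c (mact M a x)) \<and>
     (\<forall>a b. \<forall>x\<in>mcarr M. mact M (a * b) x = mact M a (mact M b x)) \<and>
     (\<forall>x\<in>mcarr M. mact M 1 x = x)"

definition mlin_on :: "('k, 'h, 'm) hmod \<Rightarrow> 'm set \<Rightarrow> ('k, 'h, 'n) hmod \<Rightarrow> ('m \<Rightarrow> 'n) \<Rightarrow> bool" where
  "mlin_on M X N f \<longleftrightarrow>
     (\<forall>x\<in>X. \<forall>y\<in>X. f (mplus M x y) = mplus N (f x) (f y)) \<and>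
     (\<forall>c. \<forall>x\<in>X. f (msmult M c x) = msmult N c (f x))"

definition submod :: "('k, 'h, 'm) hmod \<Rightarrow> 'm set \<Rightarrow> bool" where
  "submod M X \<longleftrightarrow> X \<subseteq> mcarr M \<and> mzero M \<in> X \<and>
     (\<forall>x\<in>X. \<forall>y\<in>X. mplus M x y \<in> X) \<and> (\<forall>c. \<forall>x\<in>X. msmult M c x \<in> X) \<and>
     (\<forall>h. \<forall>x\<in>X. mact M h x \<in> X)"

definition gen_submod :: "('k, 'h, 'm) hmod \<Rightarrow> 'm set \<Rightarrow> 'm set" where
  "gen_submod M X = \<Inter> {N. X \<subseteq> N \<and> submod M N}"

definition Th :: "('h \<Rightarrow> ('h \<times> 'h) list) \<Rightarrow> ('h \<Rightarrow> 'h) \<Rightarrow> ('k, 'h, 'm) hmod \<Rightarrow> ('m \<Rightarrow> 'm)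
                   \<Rightarrow> 'h \<Rightarrow> 'm \<Rightarrow> 'm" where
  "Th Delta S M T h m =
     foldr (mplus M) (map (\<lambda>(x, y). mact M x (T (mact M (S y) m))) (Delta h)) (mzero M)"

definition tobj :: "('k::field \<Rightarrow> 'h::ring_1 \<Rightarrow> 'h) \<Rightarrow> ('h \<Rightarrow> ('h \<times> 'h) list) \<Rightarrow> ('h \<Rightarrow> 'h)
                    \<Rightarrow> ('k, 'h, 'm) hmod \<Rightarrow> ('m \<Rightarrow> 'm) \<Rightarrow> bool" where
  "tobj sH Delta S M T \<longleftrightarrow>
     hmodule sH M \<and>
     (\<forall>x\<in>mcarr M. T x \<in> mcarr M) \<and> mlin_on M (mcarr M) M T \<and>
     (\<forall>x\<in>mcarr M. T (T x) = T x) \<and>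
     (\<forall>h. \<forall>x\<in>mcarr M. Th Delta S M T h (T x) = T (Th Delta S M T h x))"

definition tmor :: "('k, 'h, 'm) hmod \<Rightarrow> ('m \<Rightarrow> 'm) \<Rightarrow> ('k, 'h, 'n) hmod \<Rightarrow> ('n \<Rightarrow> 'n)
                    \<Rightarrow> ('m \<Rightarrow> 'n) \<Rightarrow> bool" where
  "tmor M T N U f \<longleftrightarrow>
     (\<forall>x\<in>T ` mcarr M. f x \<in> U ` mcarr N) \<and>
     mlin_on M (T ` mcarr M) N f \<and>
     (\<forall>h. \<forall>m\<in>T ` mcarr M. f (T (mact M h m)) = U (mact N h (f m)))"

text \<open>Isomorphism in T(_H M): composition is composition of maps, identities are identity maps
 on T(M), and morphisms are equal when they agree on T(M).\<close>
definition tiso :: "('k, 'h, 'm) hmod \<Rightarrow> ('m \<Rightarrow> 'm) \<Rightarrow> ('k, 'h, 'n) hmod \<Rightarrow> ('n \<Rightarrow> 'n) \<Rightarrow> bool" where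
  "tiso M T N U \<longleftrightarrow> (\<exists>f g. tmor M T N U f \<and> tmor N U M T g \<and>
     (\<forall>x\<in>T ` mcarr M. g (f x) = x) \<and> (\<forall>y\<in>U ` mcarr N. f (g y) = y))"

definition mcoset :: "('k, 'h, 'm) hmod \<Rightarrow> 'm set \<Rightarrow> 'm \<Rightarrow> 'm set" where
  "mcoset M X m = {mplus M m x | x. x \<in> X}"

definition quot_mod :: "('k, 'h, 'm) hmod \<Rightarrow> 'm set \<Rightarrow> ('k, 'h, 'm set) hmod" where
  "quot_mod M X =
     \<lparr> mcarr = {mcoset M X m | m. m \<in> mcarr M},
       mzero = X,
       mplus = (\<lambda>A B. {mplus M (mplus M a b) x | a b x. a \<in> A \<and> b \<in> B \<and> x \<in> X}),
       msmult = (\<lambda>c A. {mplus M (msmult M c a) x | a x. a \<in> A \<and> x \<in> X}),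
       mact = (\<lambda>h A. {mplus M (mact M h a) x | a x. a \<in> A \<and> x \<in> X}) \<rparr>"

definition quot_map :: "('k, 'h, 'm) hmod \<Rightarrow> 'm set \<Rightarrow> ('m \<Rightarrow> 'm) \<Rightarrow> 'm set \<Rightarrow> 'm set" where
  "quot_map M X T A = {mplus M (T a) x | a x. a \<in> A \<and> x \<in> X}"

end

theory Submission
  imports Defs
begin

text \<open>Morphisms of \<open>\<T>(\<^sub>H\<M>)\<close> only see the image \<open>T(M)\<close>. Restricting to the submodule
  \<open>H \<triangleright> T(M)\<close> does not change this image, so the identity of \<open>T(M)\<close> is an isomorphism.
  If \<open>T\<close> kills \<open>M'\<close>, then \<open>T\<close> is constant on the cosets of \<open>M'\<close>; hence \<open>T m \<mapsto> [T m]\<close> and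
  \<open>[T m] \<mapsto> T m\<close> are mutually inverse morphisms between \<open>(M,T)\<close> and \<open>(M/M',T)\<close>.
  None of this uses the Hopf algebra axioms.\<close>

lemma hmod_mcarr_update:
  "mcarr (M\<lparr>mcarr := N\<rparr>) = N" "mzero (M\<lparr>mcarr := N\<rparr>) = mzero M"
  "mplus (M\<lparr>mcarr := N\<rparr>) = mplus M" "msmult (M\<lparr>mcarr := N\<rparr>) = msmult M"
  "mact (M\<lparr>mcarr := N\<rparr>) = mact M"
  by simp_all

locale left_hmodule =
  fixes sH :: "'k::field \<Rightarrow> 'h::ring_1 \<Rightarrow> 'h" and M :: "('k, 'h, 'm) hmod"
  assumes hmodule: "hmodule sH M"
begin

lemma closed [simp]:
  "mzero M \<in> mcarr M"
  "x \<in> mcarr M \<Longrightarrow> y \<in> mcarr M \<Longrightarrow> mplus M x y \<in> mcarr M"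
  "x \<in> mcarr M \<Longrightarrow> msmult M c x \<in> mcarr M"
  "x \<in> mcarr M \<Longrightarrow> mact M h x \<in> mcarr M"
  using hmodule unfolding hmodule_def by auto

lemma add_assoc:
  "x \<in> mcarr M \<Longrightarrow> y \<in> mcarr M \<Longrightarrow> z \<in> mcarr M \<Longrightarrow>
   mplus M (mplus M x y) z = mplus M x (mplus M y z)"
  using hmodule unfolding hmodule_def by meson

lemma add_commute: "x \<in> mcarr M \<Longrightarrow> y \<in> mcarr M \<Longrightarrow> mplus M x y = mplus M y x"
  using hmodule unfolding hmodule_def by meson

lemma add_left_commute:
  "x \<in> mcarr M \<Longrightarrow> y \<in> mcarr M \<Longrightarrow> z \<in> mcarr M \<Longrightarrow>
   mplus M x (mplus M y z) = mplus M y (mplus M x z)"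
  using add_assoc add_commute by metis

lemma zero_add [simp]: "x \<in> mcarr M \<Longrightarrow> mplus M (mzero M) x = x"
  using hmodule unfolding hmodule_def by meson

lemma add_zero [simp]: "x \<in> mcarr M \<Longrightarrow> mplus M x (mzero M) = x"
  using add_commute zero_add closed(1) by metis

lemma add_inverse_exists: "x \<in> mcarr M \<Longrightarrow> \<exists>y\<in>mcarr M. mplus M x y = mzero M"
  using hmodule unfolding hmodule_def by meson

lemma smult_add_right [simp]:
  "x \<in> mcarr M \<Longrightarrow> y \<in> mcarr M \<Longrightarrow>
   msmult M c (mplus M x y) = mplus M (msmult M c x) (msmult M c y)"
  using hmodule unfolding hmodule_def by meson

lemma smult_add_left: "x \<in> mcarr M \<Longrightarrow> msmult M (c + d) x = mplus M (msmult M c x) (msmult M d x)"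
  using hmodule by (simp add: hmodule_def)

lemma smult_smult [simp]: "x \<in> mcarr M \<Longrightarrow> msmult M (c * d) x = msmult M c (msmult M d x)"
  using hmodule unfolding hmodule_def by meson

lemma smult_one [simp]: "x \<in> mcarr M \<Longrightarrow> msmult M 1 x = x"
  using hmodule unfolding hmodule_def by meson

lemma act_add [simp]:
  "x \<in> mcarr M \<Longrightarrow> y \<in> mcarr M \<Longrightarrow> mact M h (mplus M x y) = mplus M (mact M h x) (mact M h y)"
  using hmodule unfolding hmodule_def by meson

lemma act_smult [simp]: "x \<in> mcarr M \<Longrightarrow> mact M h (msmult M c x) = msmult M c (mact M h x)"
  using hmodule unfolding hmodule_def by meson

lemma act_add_left: "x \<in> mcarr M \<Longrightarrow> mact M (a + b) x = mplus M (mact M a x) (mact M b x)"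
  using hmodule unfolding hmodule_def by meson

lemma act_scalar [simp]: "x \<in> mcarr M \<Longrightarrow> mact M (sH c a) x = msmult M c (mact M a x)"
  using hmodule unfolding hmodule_def by meson

lemma act_mult [simp]: "x \<in> mcarr M \<Longrightarrow> mact M (a * b) x = mact M a (mact M b x)"
  using hmodule unfolding hmodule_def by meson

lemma act_one [simp]: "x \<in> mcarr M \<Longrightarrow> mact M 1 x = x"
  using hmodule unfolding hmodule_def by meson

lemma smult_zero_left:
  assumes x: "x \<in> mcarr M"
  shows "msmult M 0 x = mzero M"
proof -
  define a where "a = msmult M 0 x"
  have a: "a \<in> mcarr M" using x by (simp add: a_def)
  have idem: "mplus M a a = a" using smult_add_left[OF x, of 0 0] by (simp add: a_def)
  obtain y where y: "y \<in> mcarr M" "mplus M a y = mzero M" using add_inverse_exists[OF a] by blast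
  have "a = mplus M (mplus M a a) y" using a y by (simp add: add_assoc)
  with idem y show ?thesis by (simp add: a_def)
qed

lemma add_smult_minus_one: "x \<in> mcarr M \<Longrightarrow> mplus M x (msmult M (-1) x) = mzero M"
  using smult_add_left[of x 1 "-1"] smult_zero_left by simp

lemma submod_hmodule:
  assumes sub: "submod M N"
  shows "hmodule sH (M\<lparr>mcarr := N\<rparr>)"
proof -
  have NM: "\<And>x. x \<in> N \<Longrightarrow> x \<in> mcarr M" using sub by (auto simp: submod_def)
  have N: "mzero M \<in> N" "\<forall>x\<in>N. \<forall>y\<in>N. mplus M x y \<in> N"
    "\<forall>c. \<forall>x\<in>N. msmult M c x \<in> N" "\<forall>h. \<forall>x\<in>N. mact M h x \<in> N"
    using sub unfolding submod_def by auto
  then have "\<forall>x\<in>N. \<exists>y\<in>N. mplus M x y = mzero M"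
    using add_smult_minus_one NM by blast
  with N show ?thesis
    unfolding hmodule_def hmod_mcarr_update
    by (intro conjI ballI allI)
      (simp_all add: NM add_assoc add_commute add_left_commute smult_add_left act_add_left)
qed

lemma submod_gen_submod: "Y \<subseteq> mcarr M \<Longrightarrow> submod M (gen_submod M Y)"
  unfolding gen_submod_def submod_def by auto

lemma foldr_add_closed:
  "\<forall>p\<in>set ps. f p \<in> mcarr M \<Longrightarrow> foldr (mplus M) (map f ps) (mzero M) \<in> mcarr M"
  by (induction ps) auto

lemma Th_closed [simp]:
  "m \<in> mcarr M \<Longrightarrow> (\<And>x. x \<in> mcarr M \<Longrightarrow> T x \<in> mcarr M) \<Longrightarrow> Th Delta S M T h m \<in> mcarr M"
  unfolding Th_def by (rule foldr_add_closed) auto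

end

lemma gen_submod_superset: "Y \<subseteq> gen_submod M Y"
  unfolding gen_submod_def by blast

lemma Th_carrier_update [simp]: "Th Delta S (M\<lparr>mcarr := N\<rparr>) T = Th Delta S M T"
  unfolding Th_def[abs_def] by simp

lemma tobj_restrict_submod:
  assumes obj: "tobj sH Delta S M T" and sub: "submod M N" and TN: "T ` mcarr M \<subseteq> N"
  shows "tobj sH Delta S (M\<lparr>mcarr := N\<rparr>) T"
proof -
  interpret left_hmodule sH M using obj by unfold_locales (simp add: tobj_def)
  have NM: "N \<subseteq> mcarr M" using sub by (simp add: submod_def)
  from obj have lin: "mlin_on M (mcarr M) M T" and idem: "\<forall>x\<in>mcarr M. T (T x) = T x"
    and compat: "\<forall>h. \<forall>x\<in>mcarr M. Th Delta S M T h (T x) = T (Th Delta S M T h x)"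
    by (simp_all add: tobj_def)
  show ?thesis
    unfolding tobj_def hmod_mcarr_update Th_carrier_update
  proof (intro conjI)
    show "hmodule sH (M\<lparr>mcarr := N\<rparr>)" by (rule submod_hmodule[OF sub])
    show "mlin_on (M\<lparr>mcarr := N\<rparr>) N (M\<lparr>mcarr := N\<rparr>) T"
      using lin NM unfolding mlin_on_def hmod_mcarr_update by blast
  qed (use TN NM idem compat in blast)+
qed

lemma tiso_restrict_submod:
  assumes idem: "\<forall>x\<in>mcarr M. T (T x) = T x" and N: "N \<subseteq> mcarr M" and TN: "T ` mcarr M \<subseteq> N"
  shows "tiso M T (M\<lparr>mcarr := N\<rparr>) T"
proof -
  have image_eq: "T ` N = T ` mcarr M"
  proof
    show "T ` N \<subseteq> T ` mcarr M" using N by (rule image_mono)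
    show "T ` mcarr M \<subseteq> T ` N"
    proof
      fix y assume "y \<in> T ` mcarr M"
      then obtain m where "m \<in> mcarr M" "y = T m" by blast
      with idem TN have "y = T (T m)" "T m \<in> N" by auto
      then show "y \<in> T ` N" by blast
    qed
  qed
  show ?thesis
    unfolding tiso_def
  proof (intro exI conjI)
    show "tmor M T (M\<lparr>mcarr := N\<rparr>) T (\<lambda>x. x)" "tmor (M\<lparr>mcarr := N\<rparr>) T M T (\<lambda>x. x)"
      unfolding tmor_def mlin_on_def hmod_mcarr_update image_eq by simp_all
  qed simp_all
qed

lemma ball_image_iff: "(\<forall>x\<in>f ` A. P x) \<longleftrightarrow> (\<forall>a\<in>A. P (f a))"
  by blast

locale hmod_quotient = left_hmodule +
  fixes X
  assumes submod: "submod M X"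
begin

lemma submod_closed [simp]:
  "x \<in> X \<Longrightarrow> x \<in> mcarr M"
  "mzero M \<in> X"
  "x \<in> X \<Longrightarrow> y \<in> X \<Longrightarrow> mplus M x y \<in> X"
  "x \<in> X \<Longrightarrow> msmult M c x \<in> X"
  "x \<in> X \<Longrightarrow> mact M h x \<in> X"
  using submod unfolding submod_def by auto

abbreviation coset where "coset \<equiv> mcoset M X"
abbreviation Q where "Q \<equiv> quot_mod M X"

lemma mem_coset_iff: "z \<in> coset m \<longleftrightarrow> (\<exists>x\<in>X. z = mplus M m x)"
  unfolding mcoset_def by blast

lemma mem_coset_self [simp]: "m \<in> mcarr M \<Longrightarrow> m \<in> coset m"
  unfolding mem_coset_iff by (metis submod_closed(2) add_zero)

lemma coset_in_quot [simp]: "m \<in> mcarr M \<Longrightarrow> coset m \<in> mcarr Q"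
  unfolding quot_mod_def by auto

lemma ball_quot: "(\<forall>A\<in>mcarr Q. P A) \<longleftrightarrow> (\<forall>m\<in>mcarr M. P (coset m))"
  unfolding quot_mod_def by auto

lemma bex_quot: "(\<exists>A\<in>mcarr Q. P A) \<longleftrightarrow> (\<exists>m\<in>mcarr M. P (coset m))"
  unfolding quot_mod_def by auto

lemma quot_zero [simp]: "mzero Q = coset (mzero M)"
  unfolding quot_mod_def mcoset_def by (auto, metis submod_closed(1) zero_add)

lemma quot_add [simp]:
  assumes m: "m \<in> mcarr M" and n: "n \<in> mcarr M"
  shows "mplus Q (coset m) (coset n) = coset (mplus M m n)"
proof (rule set_eqI)
  fix z
  have "(\<exists>a\<in>coset m. \<exists>b\<in>coset n. \<exists>x\<in>X. z = mplus M (mplus M a b) x) \<longleftrightarrow>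
        (\<exists>x\<in>X. z = mplus M (mplus M m n) x)"
  proof
    assume "\<exists>a\<in>coset m. \<exists>b\<in>coset n. \<exists>x\<in>X. z = mplus M (mplus M a b) x"
    then obtain x1 x2 x where x: "x1 \<in> X" "x2 \<in> X" "x \<in> X"
      and z: "z = mplus M (mplus M (mplus M m x1) (mplus M n x2)) x"
      unfolding Bex_def mem_coset_iff by blast
    have "z = mplus M (mplus M m n) (mplus M x1 (mplus M x2 x))"
      using z x m n by (simp add: add_assoc add_left_commute)
    with x show "\<exists>x\<in>X. z = mplus M (mplus M m n) x" by auto
  qed (use m n mem_coset_self in blast)
  then show "z \<in> mplus Q (coset m) (coset n) \<longleftrightarrow> z \<in> coset (mplus M m n)"
    unfolding mem_coset_iff by (auto simp: quot_mod_def)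
qed

lemma image_coset:
  assumes m: "m \<in> mcarr M" and fm: "f m \<in> mcarr M"
    and f: "\<And>x. x \<in> X \<Longrightarrow> g x \<in> X \<and> f (mplus M m x) = mplus M (f m) (g x)"
  shows "{mplus M (f a) x | a x. a \<in> coset m \<and> x \<in> X} = coset (f m)"
proof (rule set_eqI)
  fix z
  have "(\<exists>a\<in>coset m. \<exists>x\<in>X. z = mplus M (f a) x) \<longleftrightarrow> (\<exists>x\<in>X. z = mplus M (f m) x)"
  proof
    assume "\<exists>a\<in>coset m. \<exists>x\<in>X. z = mplus M (f a) x"
    then obtain x1 x where x: "x1 \<in> X" "x \<in> X" and z: "z = mplus M (f (mplus M m x1)) x"
      unfolding Bex_def mem_coset_iff by blast
    from x f have gx: "g x1 \<in> X" by blast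
    have "z = mplus M (f m) (mplus M (g x1) x)"
      using z x gx fm f by (simp add: add_assoc)
    with x gx show "\<exists>x\<in>X. z = mplus M (f m) x" by auto
  qed (use m mem_coset_self in blast)
  then show "z \<in> {mplus M (f a) x | a x. a \<in> coset m \<and> x \<in> X} \<longleftrightarrow> z \<in> coset (f m)"
    unfolding mem_coset_iff[of z] by blast
qed

lemma quot_smult [simp]: "m \<in> mcarr M \<Longrightarrow> msmult Q c (coset m) = coset (msmult M c m)"
  unfolding quot_mod_def hmod.simps by (rule image_coset[where g = "msmult M c"]) auto

lemma quot_act [simp]: "m \<in> mcarr M \<Longrightarrow> mact Q h (coset m) = coset (mact M h m)"
  unfolding quot_mod_def hmod.simps by (rule image_coset[where g = "mact M h"]) auto

lemma quot_hmodule: "hmodule sH Q"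
proof -
  have "\<forall>m\<in>mcarr M. \<exists>n\<in>mcarr M. coset (mplus M m n) = coset (mzero M)"
    using add_smult_minus_one closed(3) by metis
  then show ?thesis
    unfolding hmodule_def ball_quot bex_quot
    by (simp add: add_assoc add_commute add_left_commute smult_add_left act_add_left)
qed

lemma foldr_quot:
  "\<forall>p\<in>set ps. g p = coset (f p) \<and> f p \<in> mcarr M \<Longrightarrow>
   foldr (mplus Q) (map g ps) (mzero Q) = coset (foldr (mplus M) (map f ps) (mzero M))"
  by (induction ps) (auto simp: foldr_add_closed)

end

locale hmod_quotient_proj = hmod_quotient +
  fixes T
  assumes T_closed [simp]: "x \<in> mcarr M \<Longrightarrow> T x \<in> mcarr M"
    and T_add [simp]: "x \<in> mcarr M \<Longrightarrow> y \<in> mcarr M \<Longrightarrow> T (mplus M x y) = mplus M (T x) (T y)"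
    and T_smult [simp]: "x \<in> mcarr M \<Longrightarrow> T (msmult M c x) = msmult M c (T x)"
    and T_idem [simp]: "x \<in> mcarr M \<Longrightarrow> T (T x) = T x"
    and T_kills [simp]: "x \<in> X \<Longrightarrow> T x = mzero M"
begin

lemma T_coset: "m \<in> mcarr M \<Longrightarrow> a \<in> coset m \<Longrightarrow> T a = T m"
  unfolding mem_coset_iff by auto

lemma T_some_coset [simp]: "m \<in> mcarr M \<Longrightarrow> T (SOME a. a \<in> coset m) = T m"
  by (meson T_coset mem_coset_self someI)

lemma quot_map_coset [simp]: "m \<in> mcarr M \<Longrightarrow> quot_map M X T (coset m) = coset (T m)"
  unfolding quot_map_def by (rule image_coset[where g = "\<lambda>_. mzero M"]) auto

lemma Th_quot_coset [simp]:
  "m \<in> mcarr M \<Longrightarrow> Th Delta S Q (quot_map M X T) h (coset m) = coset (Th Delta S M T h m)"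
  unfolding Th_def by (rule foldr_quot) auto

lemma quot_tobj:
  assumes "\<forall>h. \<forall>x\<in>mcarr M. Th Delta S M T h (T x) = T (Th Delta S M T h x)"
  shows "tobj sH Delta S Q (quot_map M X T)"
  unfolding tobj_def mlin_on_def ball_quot using quot_hmodule assms by simp

text \<open>The inverse picks any representative of a coset; \<open>T\<close> does not see the choice.\<close>

lemma quot_tiso: "tiso M T Q (quot_map M X T)"
  unfolding tiso_def
proof (intro exI conjI)
  show "tmor M T Q (quot_map M X T) coset"
    unfolding tmor_def mlin_on_def ball_image_iff
  proof (intro conjI ballI allI)
    fix m assume m: "m \<in> mcarr M"
    show "coset (T m) \<in> quot_map M X T ` mcarr Q"
      using m by (intro image_eqI[where x = "coset (T m)"]) simp_all
  qed simp_all
  show "tmor Q (quot_map M X T) M T (\<lambda>A. T (SOME a. a \<in> A))"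
    unfolding tmor_def mlin_on_def ball_image_iff ball_quot
  proof (intro conjI ballI allI)
    fix m assume m: "m \<in> mcarr M"
    show "T (SOME a. a \<in> quot_map M X T (coset m)) \<in> T ` mcarr M"
      using m by (intro image_eqI[where x = "T m"]) simp_all
  qed simp_all
  show "\<forall>x\<in>T ` mcarr M. T (SOME a. a \<in> coset x) = x"
    unfolding ball_image_iff by simp
  show "\<forall>y\<in>quot_map M X T ` mcarr Q. coset (T (SOME a. a \<in> y)) = y"
    unfolding ball_image_iff ball_quot by simp
qed

end

lemma tobj_tiso_quot_mod:
  assumes obj: "tobj sH Delta S M T" and sub: "submod M X" and kill: "\<forall>x\<in>X. T x = mzero M"
  shows "tobj sH Delta S (quot_mod M X) (quot_map M X T) \<and> tiso M T (quot_mod M X) (quot_map M X T)"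
proof -
  interpret hmod_quotient_proj sH M X T
    using assms by unfold_locales (auto simp: tobj_def mlin_on_def)
  have "\<forall>h. \<forall>x\<in>mcarr M. Th Delta S M T h (T x) = T (Th Delta S M T h x)"
    using obj by (simp add: tobj_def)
  then show ?thesis using quot_tobj quot_tiso by blast
qed

theorem mainTheorem7:
  fixes sH :: "'k::field \<Rightarrow> 'h::ring_1 \<Rightarrow> 'h"
    and Delta :: "'h \<Rightarrow> ('h \<times> 'h) list" and eps :: "'h \<Rightarrow> 'k" and S :: "'h \<Rightarrow> 'h"
    and M :: "('k, 'h, 'm) hmod" and T :: "'m \<Rightarrow> 'm"
  assumes hopf: "hopf_algebra sH Delta eps S"
    and obj: "tobj sH Delta S M T"
  shows "tobj sH Delta S (M\<lparr>mcarr := gen_submod M (T ` mcarr M)\<rparr>) T \<and>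
         tiso M T (M\<lparr>mcarr := gen_submod M (T ` mcarr M)\<rparr>) T \<and>
         (\<forall>M'. submod M M' \<and> (\<forall>x\<in>M'. T x = mzero M) \<longrightarrow>
         tobj sH Delta S (quot_mod M M') (quot_map M M' T) \<and>
         tiso M T (quot_mod M M') (quot_map M M' T))"
proof -
  interpret left_hmodule sH M using obj by unfold_locales (simp add: tobj_def)
  define N where "N = gen_submod M (T ` mcarr M)"
  have sub: "submod M N"
    using obj submod_gen_submod unfolding N_def tobj_def by (simp add: image_subset_iff)
  have TN: "T ` mcarr M \<subseteq> N"
    unfolding N_def by (rule gen_submod_superset)
  have "N \<subseteq> mcarr M" using sub by (simp add: submod_def)
  then have "tiso M T (M\<lparr>mcarr := N\<rparr>) T"
    using obj TN by (intro tiso_restrict_submod) (simp_all add: tobj_def)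
  with tobj_restrict_submod[OF obj sub TN] tobj_tiso_quot_mod[OF obj] show ?thesis
    unfolding N_def by blast
qed

end
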